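(* Let $X\subset\operatorname{Hol}(\mathbb{D})$ be a Banach space such that (X1) for each $w\in\mathbb{D}$ the map $f\mapsto f(w)$, $X\to\mathbb{C}$, is continuous; (X2) $X$ contains the polynomials and they are dense in $X$; (X3) if $f\in X$ then $zf\in X$. Let $Y\subset X$ be a set such that (Y1) if $g\in X$ and $0<\inf_{\mathbb{D}}|g|\le\sup_{\mathbb{D}}|g|<\infty$, then $g\in Y$; (Y2) for every $\lambda\in\mathbb{T}$, the function $g(z):=z-\lambda$ belongs to $Y$. Let $\Lambda:X\to\mathbb{C}$ be a continuous linear functional such that $\Lambda(1)=1$ and $\Lambda(g)\neq0$ for all $g\in Y$. Then there exists $w\in\mathbb{D}$ such that \[ \Lambda(f)=f(w)\qquad(f\in X). \]
   Context: $\mathbb{D}$ is the open unit disk, $\mathbb{T}$ the unit circle, and $\operatorname{Hol}(\mathbb{D})$ the space of holomorphic functions on $\mathbb{D}$. *)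

theory Defs
  imports "HOL-Analysis.Analysis" "HOL-Computational_Algebra.Polynomial"
begin

text \<open>Functions on the unit disk are represented as functions on the whole plane
  that vanish outside the open unit disk (canonical representatives).\<close>

definition restrD :: "(complex \<Rightarrow> complex) \<Rightarrow> complex \<Rightarrow> complex" where
  "restrD f = (\<lambda>z. if z \<in> ball 0 1 then f z else 0)"

definition hol_banach_space :: "(complex \<Rightarrow> complex) set \<Rightarrow> ((complex \<Rightarrow> complex) \<Rightarrow> real) \<Rightarrow> bool" where
  "hol_banach_space X N \<longleftrightarrow>
     (\<forall>f\<in>X. f holomorphic_on ball 0 1 \<and> (\<forall>z. z \<notin> ball 0 1 \<longrightarrow> f z = 0)) \<and>
     (\<lambda>z. 0) \<in> X \<and>
     (\<forall>f\<in>X. \<forall>g\<in>X. (\<lambda>z. f z + g z) \<in> X) \<and>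
     (\<forall>c. \<forall>f\<in>X. (\<lambda>z. c * f z) \<in> X) \<and>
     (\<forall>f\<in>X. 0 \<le> N f \<and> (N f = 0 \<longleftrightarrow> f = (\<lambda>z. 0))) \<and>
     (\<forall>c. \<forall>f\<in>X. N (\<lambda>z. c * f z) = cmod c * N f) \<and>
     (\<forall>f\<in>X. \<forall>g\<in>X. N (\<lambda>z. f z + g z) \<le> N f + N g) \<and>
     (\<forall>s. (\<forall>n. s n \<in> X) \<and> (\<forall>e>0. \<exists>M. \<forall>m\<ge>M. \<forall>n\<ge>M. N (\<lambda>z. s m z - s n z) < e)
          \<longrightarrow> (\<exists>f\<in>X. (\<lambda>n. N (\<lambda>z. s n z - f z)) \<longlonglongrightarrow> 0))"

end

theory Submission
  imports Defs "HOL-Computational_Algebra.Fundamental_Theorem_Algebra"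
begin

text \<open>The argument is that of Gleason, Kahane and Zelazko, carried out on polynomials.
  Restricted to polynomials, \<open>\<Lambda>\<close> is a unital linear functional \<open>L\<close> that does not vanish on
  polynomials bounded away from zero on the disc. If \<open>L x = 0\<close> and \<open>|x| \<le> B\<close> on the disc, the
  polynomial \<open>\<mu> \<mapsto> L ((1 - \<mu> x)^n)\<close> has no zero in \<open>|\<mu>| < 1/B\<close>, so it factors as
  \<open>\<Prod>(1 - r\<^sub>i \<mu>)\<close> with \<open>|r\<^sub>i| \<le> B\<close>. Its coefficients of degree 1 and 2 give \<open>\<Sum> r\<^sub>i = 0\<close> and
  \<open>n (n - 1) L (x\<^sup>2) = - \<Sum> r\<^sub>i\<^sup>2\<close>, hence \<open>(n - 1) |L (x\<^sup>2)| \<le> B\<^sup>2\<close> for every \<open>n\<close>, i.e. \<open>L (x\<^sup>2) = 0\<close>.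
  Polarisation makes \<open>L\<close> multiplicative, so \<open>L\<close> is evaluation at \<open>w = L z\<close>; the hypotheses on \<open>Y\<close>
  put \<open>w\<close> in the open disc, and density of the polynomials extends \<open>\<Lambda> = \<delta>\<^sub>w\<close> to all of \<open>X\<close>.\<close>

lemma low_coeffs_prod_one_minus:
  fixes rs :: "complex list"
  defines "P \<equiv> \<Prod>r\<leftarrow>rs. [:1, -r:]"
  shows "coeff P 0 = 1" and "coeff P 1 = - sum_list rs"
    and "2 * coeff P 2 = (sum_list rs)\<^sup>2 - sum_list (map (\<lambda>r. r\<^sup>2) rs)"
proof -
  have "coeff P 0 = 1 \<and> coeff P 1 = - sum_list rs \<and>
        2 * coeff P 2 = (sum_list rs)\<^sup>2 - sum_list (map (\<lambda>r. r\<^sup>2) rs)"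
    unfolding P_def
  proof (induction rs)
    case (Cons r rs)
    let ?P = "\<Prod>r\<leftarrow>rs. [:1, -r:]"
    have P: "(\<Prod>r\<leftarrow>r#rs. [:1, -r:]) = ?P + pCons 0 (smult (-r) ?P)"
      by simp
    have "coeff (\<Prod>r\<leftarrow>r#rs. [:1, -r:]) 1 = coeff ?P 1 - r * coeff ?P 0"
      and "coeff (\<Prod>r\<leftarrow>r#rs. [:1, -r:]) 2 = coeff ?P 2 - r * coeff ?P 1"
      unfolding P by (simp_all add: numeral_eq_Suc)
    with Cons show ?case
      unfolding P by (auto simp: power2_eq_square algebra_simps)
  qed simp
  then show "coeff P 0 = 1" and "coeff P 1 = - sum_list rs"
    and "2 * coeff P 2 = (sum_list rs)\<^sup>2 - sum_list (map (\<lambda>r. r\<^sup>2) rs)"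
    by blast+
qed

lemma prod_one_minus_factorization:
  fixes Q :: "complex poly"
  assumes "poly Q 0 = 1" and "\<And>\<mu>. poly Q \<mu> = 0 \<Longrightarrow> 1 \<le> cmod \<mu> * B"
  obtains rs where "Q = (\<Prod>r\<leftarrow>rs. [:1, -r:])" "length rs = degree Q" "\<forall>r\<in>set rs. cmod r \<le> B"
  using assms
proof (induction "degree Q" arbitrary: Q thesis)
  case 0
  then have "Q = 1"
    using degree_0_id[of Q] by (simp add: poly_0_coeff_0 one_pCons)
  with "0.prems"(1)[of "[]"] show ?case by simp
next
  case (Suc n)
  have "\<not> constant (poly Q)"
    using Suc.hyps(2) by (simp add: constant_degree)
  then obtain a where a: "poly Q a = 0"
    using fundamental_theorem_of_algebra by blast
  have "a \<noteq> 0"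
    using a Suc.prems(2) by auto
  have "cmod (1 / a) \<le> B"
    using Suc.prems(3)[OF a] \<open>a \<noteq> 0\<close> by (simp add: norm_divide field_simps)
  obtain R where "Q = [:-a, 1:] * R"
    using a by (metis dvdE poly_eq_0_iff_dvd)
  define R' where "R' = smult (-a) R"
  have QR: "Q = [:1, -1/a:] * R'"
    using \<open>Q = [:-a, 1:] * R\<close> \<open>a \<noteq> 0\<close> unfolding R'_def by (simp add: field_simps)
  have "R' \<noteq> 0"
    using QR Suc.hyps(2) by auto
  then have "degree Q = 1 + degree R'"
    unfolding QR using \<open>a \<noteq> 0\<close> by (subst degree_mult_eq) auto
  then have "degree R' = n"
    using Suc.hyps(2) by simp
  moreover have "poly R' 0 = 1" and "\<And>\<mu>. poly R' \<mu> = 0 \<Longrightarrow> 1 \<le> cmod \<mu> * B"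
    using Suc.prems(2,3) QR by auto
  ultimately obtain rs where "R' = (\<Prod>r\<leftarrow>rs. [:1, -r:])" "length rs = n" "\<forall>r\<in>set rs. cmod r \<le> B"
    using Suc.hyps(1) by blast
  with QR \<open>cmod (1 / a) \<le> B\<close> Suc.hyps(2) show ?case
    using Suc.prems(1)[of "1/a # rs"] by auto
qed

lemma norm_sum_list_le:
  fixes f :: "'a \<Rightarrow> 'b::real_normed_vector"
  assumes "\<And>x. x \<in> set xs \<Longrightarrow> norm (f x) \<le> B"
  shows "norm (sum_list (map f xs)) \<le> real (length xs) * B"
  using assms
proof (induction xs)
  case (Cons x xs)
  then have "norm (sum_list (map f (x # xs))) \<le> B + real (length xs) * B"
    by (simp add: norm_triangle_le add_mono)
  then show ?case
    by (simp add: algebra_simps)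
qed simp

lemma poly_bounded_on_unit_disc:
  fixes p :: "complex poly"
  obtains B where "B > 0" "\<And>z. z \<in> ball 0 1 \<Longrightarrow> cmod (poly p z) \<le> B"
proof -
  have "bounded (poly p ` cball 0 1)"
    by (intro compact_imp_bounded compact_continuous_image continuous_on_poly continuous_on_id
        compact_cball)
  then obtain B where "B > 0" "\<forall>y\<in>poly p ` cball 0 1. norm y \<le> B"
    using bounded_pos by metis
  then show thesis
    using that by auto
qed

locale unital_poly_functional =
  fixes L :: "complex poly \<Rightarrow> complex"
  assumes add: "L (p + q) = L p + L q"
    and smult: "L (smult c p) = c * L p"
    and one: "L 1 = 1"
begin

lemma zero: "L 0 = 0"
  using smult[of 0 0] by simp

lemma diff: "L (p - q) = L p - L q"
  using add[of p "smult (-1) q"] smult[of "-1" q] by simp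

lemma const: "L [:c:] = c"
  using smult[of c 1] one by simp

lemma sum: "L (\<Sum>k\<in>A. f k) = (\<Sum>k\<in>A. L (f k))"
  by (induction A rule: infinite_finite_induct) (simp_all add: zero add)

lemma mult_if_square_kernel:
  assumes square_kernel: "\<And>x. L x = 0 \<Longrightarrow> L (x\<^sup>2) = 0"
  shows "L (p * q) = L p * L q"
proof -
  have square: "L (p\<^sup>2) = (L p)\<^sup>2" for p
  proof -
    define c where "c = L p"
    have "L (p - [:c:]) = 0"
      by (simp add: diff const c_def)
    then have "L ((p - [:c:])\<^sup>2) = 0"
      by (rule square_kernel)
    moreover have "(p - [:c:])\<^sup>2 = p\<^sup>2 - smult c p - smult c p + [:c\<^sup>2:]"
      by (simp add: power2_eq_square algebra_simps)
    ultimately have "L (p\<^sup>2) - c * L p - c * L p + c\<^sup>2 = 0"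
      by (simp only: add diff smult const)
    then show ?thesis
      by (simp add: c_def power2_eq_square)
  qed
  have "(p + q)\<^sup>2 = p\<^sup>2 + (p * q + p * q) + q\<^sup>2"
    by (simp add: power2_eq_square algebra_simps)
  then have "(L p + L q)\<^sup>2 = (L p)\<^sup>2 + (L (p * q) + L (p * q)) + (L q)\<^sup>2"
    using square[of "p + q"] by (simp only: add square)
  then show ?thesis
    by (simp add: power2_eq_square algebra_simps)
qed

lemma eq_poly_if_mult:
  assumes mult: "\<And>p q. L (p * q) = L p * L q"
  shows "L p = poly p (L [:0, 1:])"
proof (induction p rule: pCons_induct)
  case (pCons a p)
  have "pCons a p = [:a:] + [:0, 1:] * p"
    by simp
  then show ?case
    using pCons by (simp only: add mult const) simp
qed (simp add: zero)

end

definition binomial_moment_poly :: "(complex poly \<Rightarrow> complex) \<Rightarrow> complex poly \<Rightarrow> nat \<Rightarrow> complex poly"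
  where "binomial_moment_poly L x n = (\<Sum>k\<le>n. monom (of_nat (n choose k) * (-1) ^ k * L (x ^ k)) k)"

lemma coeff_binomial_moment_poly:
  "coeff (binomial_moment_poly L x n) k = (if k \<le> n then of_nat (n choose k) * (-1) ^ k * L (x ^ k) else 0)"
  by (simp add: binomial_moment_poly_def coeff_sum coeff_monom)

lemma degree_binomial_moment_poly: "degree (binomial_moment_poly L x n) \<le> n"
  by (rule degree_le) (simp add: coeff_binomial_moment_poly)

lemma (in unital_poly_functional) poly_binomial_moment_poly:
  "poly (binomial_moment_poly L x n) \<mu> = L ((1 - smult \<mu> x) ^ n)"
proof -
  have "(1 - smult \<mu> x) ^ n = (smult (-\<mu>) x + 1) ^ n"
    by simp
  also have "\<dots> = (\<Sum>k\<le>n. of_nat (n choose k) * smult (-\<mu>) x ^ k * 1 ^ (n - k))"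
    by (rule binomial_ring)
  also have "\<dots> = (\<Sum>k\<le>n. smult (of_nat (n choose k) * (-\<mu>) ^ k) (x ^ k))"
    by (simp only: power_one mult_1_right smult_power) (simp add: of_nat_poly mult.commute)
  finally have "L ((1 - smult \<mu> x) ^ n) = (\<Sum>k\<le>n. of_nat (n choose k) * (-\<mu>) ^ k * L (x ^ k))"
    by (simp only: sum smult)
  then show ?thesis
    by (simp add: binomial_moment_poly_def poly_sum poly_monom power_minus[of \<mu>] mult_ac)
qed

locale gkz_poly_functional = unital_poly_functional +
  assumes nonzero_if_bounded_below:
    "\<delta> > 0 \<Longrightarrow> (\<And>z. z \<in> ball 0 1 \<Longrightarrow> \<delta> \<le> cmod (poly p z)) \<Longrightarrow> L p \<noteq> 0"
begin

lemma binomial_moment_poly_nonzero: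
  assumes bound: "\<And>z. z \<in> ball 0 1 \<Longrightarrow> cmod (poly x z) \<le> B" and \<mu>: "cmod \<mu> * B < 1"
  shows "poly (binomial_moment_poly L x n) \<mu> \<noteq> 0"
  unfolding poly_binomial_moment_poly
proof (rule nonzero_if_bounded_below)
  show "(1 - cmod \<mu> * B) ^ n > 0"
    using \<mu> by simp
  fix z :: complex
  assume "z \<in> ball 0 1"
  then have "cmod (\<mu> * poly x z) \<le> cmod \<mu> * B"
    using bound by (simp add: norm_mult mult_left_mono)
  then have "1 - cmod \<mu> * B \<le> cmod (1 - \<mu> * poly x z)"
    using norm_triangle_ineq2[of 1 "\<mu> * poly x z"] by simp
  then show "(1 - cmod \<mu> * B) ^ n \<le> cmod (poly ((1 - smult \<mu> x) ^ n) z)"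
    using \<mu> by (simp add: poly_power norm_power power_mono)
qed

lemma square_kernel_bound:
  assumes "L x = 0" and bound: "\<And>z. z \<in> ball 0 1 \<Longrightarrow> cmod (poly x z) \<le> B" and "n \<ge> 2"
  shows "real (n - 1) * cmod (L (x\<^sup>2)) \<le> B\<^sup>2"
proof -
  let ?Q = "binomial_moment_poly L x n"
  have "poly ?Q 0 = 1"
    by (simp add: poly_0_coeff_0 coeff_binomial_moment_poly one)
  moreover have "1 \<le> cmod \<mu> * B" if "poly ?Q \<mu> = 0" for \<mu>
    using binomial_moment_poly_nonzero[OF bound] that by force
  ultimately obtain rs where rs: "?Q = (\<Prod>r\<leftarrow>rs. [:1, -r:])" "length rs = degree ?Q"
    "\<forall>r\<in>set rs. cmod r \<le> B"
    by (rule prod_one_minus_factorization)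
  have "coeff ?Q 1 = 0"
    using \<open>L x = 0\<close> \<open>n \<ge> 2\<close> by (simp add: coeff_binomial_moment_poly)
  then have "sum_list rs = 0"
    using low_coeffs_prod_one_minus(2)[of rs] rs(1) by simp
  have "2 * (n choose 2) = n * (n - 1)"
    by (cases n) (simp_all add: choose_two)
  moreover have "2 * coeff ?Q 2 = of_nat (2 * (n choose 2)) * L (x\<^sup>2)"
    using \<open>n \<ge> 2\<close> by (simp add: coeff_binomial_moment_poly)
  ultimately have "of_nat n * of_nat (n - 1) * L (x\<^sup>2) = 2 * coeff ?Q 2"
    by (simp only: of_nat_mult)
  also have "\<dots> = - sum_list (map (\<lambda>r. r\<^sup>2) rs)"
    using low_coeffs_prod_one_minus(3)[of rs] rs(1) \<open>sum_list rs = 0\<close> by simp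
  finally have "real n * (real (n - 1) * cmod (L (x\<^sup>2))) = cmod (sum_list (map (\<lambda>r. r\<^sup>2) rs))"
    by (metis norm_minus_cancel norm_mult norm_of_nat mult.assoc)
  also have "\<dots> \<le> real (length rs) * B\<^sup>2"
    using rs(3) by (intro norm_sum_list_le) (simp add: norm_power power_mono)
  also have "\<dots> \<le> real n * B\<^sup>2"
    using rs(2) degree_binomial_moment_poly[of L x n] by (simp add: mult_right_mono)
  finally show ?thesis
    using \<open>n \<ge> 2\<close> by simp
qed

lemma square_kernel:
  assumes "L x = 0"
  shows "L (x\<^sup>2) = 0"
proof (rule ccontr)
  assume "L (x\<^sup>2) \<noteq> 0"
  obtain B where bound: "\<And>z. z \<in> ball 0 1 \<Longrightarrow> cmod (poly x z) \<le> B"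
    using poly_bounded_on_unit_disc by metis
  obtain n where "B\<^sup>2 / cmod (L (x\<^sup>2)) < real n"
    using reals_Archimedean2 by blast
  then have "B\<^sup>2 < real n * cmod (L (x\<^sup>2))"
    using \<open>L (x\<^sup>2) \<noteq> 0\<close> by (simp add: divide_less_eq)
  also have "\<dots> \<le> real (n + 1) * cmod (L (x\<^sup>2))"
    by (simp add: mult_right_mono)
  finally have "B\<^sup>2 < real (n + 1) * cmod (L (x\<^sup>2))" .
  with square_kernel_bound[OF assms bound, of "n + 2"] show False
    by simp
qed

lemma eq_poly_eval: "L p = poly p (L [:0, 1:])"
  by (rule eq_poly_if_mult[OF mult_if_square_kernel[OF square_kernel]])

lemma eval_point_in_cball: "cmod (L [:0, 1:]) \<le> 1"
proof (rule ccontr)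
  define w where "w = L [:0, 1:]"
  assume "\<not> cmod (L [:0, 1:]) \<le> 1"
  then have "cmod w - 1 > 0"
    by (simp add: w_def)
  moreover have "cmod w - 1 \<le> cmod (poly [:-w, 1:] z)" if "z \<in> ball 0 1" for z
    using that norm_triangle_ineq3[of w z] by (simp add: norm_minus_commute)
  ultimately have "L [:-w, 1:] \<noteq> 0"
    by (rule nonzero_if_bounded_below)
  moreover have "L [:-w, 1:] = poly [:-w, 1:] w"
    unfolding w_def by (rule eq_poly_eval)
  ultimately show False
    by simp
qed

end

lemma restrD_poly_add: "restrD (poly (p + q)) = (\<lambda>z. restrD (poly p) z + restrD (poly q) z)"
  by (auto simp: restrD_def)

lemma restrD_poly_smult: "restrD (poly (smult c p)) = (\<lambda>z. c * restrD (poly p) z)"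
  by (auto simp: restrD_def)

lemma restrD_poly_const: "restrD (poly [:c:]) = restrD (\<lambda>z. c)"
  unfolding restrD_def by (rule ext) simp

lemma restrD_poly_linear: "restrD (poly [:-l, 1:]) = restrD (\<lambda>z. z - l)"
  unfolding restrD_def by (rule ext) simp

lemma gkz_poly_functional_restrD:
  fixes \<Lambda> :: "(complex \<Rightarrow> complex) \<Rightarrow> complex"
  assumes polys: "\<forall>p :: complex poly. restrD (poly p) \<in> X"
    and Y1: "\<forall>g\<in>X. (\<exists>a>0. \<forall>z\<in>ball 0 1. a \<le> cmod (g z)) \<and>
                    (\<exists>b. \<forall>z\<in>ball 0 1. cmod (g z) \<le> b) \<longrightarrow> g \<in> Y"
    and lin_add: "\<forall>f\<in>X. \<forall>g\<in>X. \<Lambda> (\<lambda>z. f z + g z) = \<Lambda> f + \<Lambda> g"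
    and lin_scale: "\<forall>c. \<forall>f\<in>X. \<Lambda> (\<lambda>z. c * f z) = c * \<Lambda> f"
    and one: "\<Lambda> (restrD (\<lambda>z. 1)) = 1"
    and nonvan: "\<forall>g\<in>Y. \<Lambda> g \<noteq> 0"
  shows "gkz_poly_functional (\<lambda>p. \<Lambda> (restrD (poly p)))"
proof
  show "\<Lambda> (restrD (poly (p + q))) = \<Lambda> (restrD (poly p)) + \<Lambda> (restrD (poly q))" for p q
    by (simp add: restrD_poly_add lin_add polys)
  show "\<Lambda> (restrD (poly (smult c p))) = c * \<Lambda> (restrD (poly p))" for c p
    by (simp add: restrD_poly_smult lin_scale polys)
  show "\<Lambda> (restrD (poly 1)) = 1"
    using restrD_poly_const[of 1] one by (simp add: one_pCons)
  fix \<delta> :: real and p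
  assume "\<delta> > 0" and "\<And>z. z \<in> ball 0 1 \<Longrightarrow> \<delta> \<le> cmod (poly p z)"
  moreover obtain B where "\<And>z. z \<in> ball 0 1 \<Longrightarrow> cmod (poly p z) \<le> B"
    using poly_bounded_on_unit_disc by metis
  ultimately have "restrD (poly p) \<in> Y"
    by (intro Y1[rule_format, OF polys[rule_format]] conjI exI[of _ \<delta>] exI[of _ B])
      (auto simp: restrD_def)
  then show "\<Lambda> (restrD (poly p)) \<noteq> 0"
    using nonvan by blast
qed

lemma bounded_functional_vanishing_on_dense_polys:
  fixes \<Phi> :: "(complex \<Rightarrow> complex) \<Rightarrow> complex"
  assumes banach: "hol_banach_space X N"
    and polys: "\<forall>p :: complex poly. restrD (poly p) \<in> X"
    and dense: "\<forall>f\<in>X. \<forall>e>0. \<exists>p :: complex poly. N (\<lambda>z. f z - restrD (poly p) z) < e"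
    and add: "\<forall>f\<in>X. \<forall>g\<in>X. \<Phi> (\<lambda>z. f z + g z) = \<Phi> f + \<Phi> g"
    and bounded: "\<forall>f\<in>X. cmod (\<Phi> f) \<le> C * N f"
    and vanish: "\<forall>p. \<Phi> (restrD (poly p)) = 0"
    and "f \<in> X"
  shows "\<Phi> f = 0"
proof -
  have "cmod (\<Phi> f) \<le> 0 + e" if "e > 0" for e
  proof -
    have "e / (\<bar>C\<bar> + 1) > 0"
      using \<open>e > 0\<close> by simp
    then obtain p where p: "N (\<lambda>z. f z - restrD (poly p) z) < e / (\<bar>C\<bar> + 1)"
      using dense \<open>f \<in> X\<close> by blast
    define g where "g = (\<lambda>z. f z - restrD (poly p) z)"
    have closed: "\<forall>f\<in>X. \<forall>g\<in>X. (\<lambda>z. f z + g z) \<in> X" "\<forall>c. \<forall>f\<in>X. (\<lambda>z. c * f z) \<in> X"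
      using banach unfolding hol_banach_space_def by blast+
    have "g = (\<lambda>z. f z + (\<lambda>z. (- 1) * restrD (poly p) z) z)"
      by (simp add: g_def)
    also have "\<dots> \<in> X"
      by (rule closed(1)[rule_format, OF \<open>f \<in> X\<close> closed(2)[rule_format, OF polys[rule_format]]])
    finally have "g \<in> X" .
    then have "N g \<ge> 0"
      using banach unfolding hol_banach_space_def by blast
    have "\<Phi> f = \<Phi> (\<lambda>z. g z + restrD (poly p) z)"
      by (simp add: g_def)
    also have "\<dots> = \<Phi> g"
      using add polys vanish \<open>g \<in> X\<close> by simp
    finally have "cmod (\<Phi> f) \<le> C * N g"
      using bounded \<open>g \<in> X\<close> by simp
    also have "\<dots> \<le> (\<bar>C\<bar> + 1) * N g"
      using \<open>N g \<ge> 0\<close> by (intro mult_right_mono) auto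
    also have "\<dots> \<le> e"
      using p by (simp add: g_def field_simps)
    finally show ?thesis
      by simp
  qed
  then have "cmod (\<Phi> f) \<le> 0"
    by (rule field_le_epsilon)
  then show ?thesis
    by simp
qed

theorem theorem7p1:
  fixes X Y :: "(complex \<Rightarrow> complex) set"
    and N :: "(complex \<Rightarrow> complex) \<Rightarrow> real"
    and \<Lambda> :: "(complex \<Rightarrow> complex) \<Rightarrow> complex"
  assumes banach: "hol_banach_space X N"
    and X1: "\<forall>w\<in>ball 0 1. \<exists>C. \<forall>f\<in>X. cmod (f w) \<le> C * N f"
    and X2a: "\<forall>p :: complex poly. restrD (poly p) \<in> X"
    and X2b: "\<forall>f\<in>X. \<forall>e>0. \<exists>p :: complex poly. N (\<lambda>z. f z - restrD (poly p) z) < e"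
    and X3: "\<forall>f\<in>X. (\<lambda>z. z * f z) \<in> X"
    and YX: "Y \<subseteq> X"
    and Y1: "\<forall>g\<in>X. (\<exists>a>0. \<forall>z\<in>ball 0 1. a \<le> cmod (g z)) \<and>
                    (\<exists>b. \<forall>z\<in>ball 0 1. cmod (g z) \<le> b) \<longrightarrow> g \<in> Y"
    and Y2: "\<forall>l. cmod l = 1 \<longrightarrow> restrD (\<lambda>z. z - l) \<in> Y"
    and lin_add: "\<forall>f\<in>X. \<forall>g\<in>X. \<Lambda> (\<lambda>z. f z + g z) = \<Lambda> f + \<Lambda> g"
    and lin_scale: "\<forall>c. \<forall>f\<in>X. \<Lambda> (\<lambda>z. c * f z) = c * \<Lambda> f"
    and cont: "\<exists>C. \<forall>f\<in>X. cmod (\<Lambda> f) \<le> C * N f"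
    and one: "\<Lambda> (restrD (\<lambda>z. 1)) = 1"
    and nonvan: "\<forall>g\<in>Y. \<Lambda> g \<noteq> 0"
  shows "\<exists>w\<in>ball 0 1. \<forall>f\<in>X. \<Lambda> f = f w"
proof -
  interpret gkz_poly_functional "\<lambda>p. \<Lambda> (restrD (poly p))"
    by (rule gkz_poly_functional_restrD[OF X2a Y1 lin_add lin_scale one nonvan])
  define w where "w = \<Lambda> (restrD (poly [:0, 1:]))"
  have eval: "\<Lambda> (restrD (poly p)) = poly p w" for p
    unfolding w_def by (rule eq_poly_eval)
  have "cmod w \<noteq> 1"
    using Y2 nonvan eval[of "[:-w, 1:]"] by (auto simp flip: restrD_poly_linear)
  with eval_point_in_cball have "w \<in> ball 0 1"
    by (simp add: w_def)
  obtain C1 C2 where C1: "\<forall>f\<in>X. cmod (\<Lambda> f) \<le> C1 * N f" and C2: "\<forall>f\<in>X. cmod (f w) \<le> C2 * N f"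
    using cont X1 \<open>w \<in> ball 0 1\<close> by blast
  have "\<Lambda> f - f w = 0" if "f \<in> X" for f
  proof (rule bounded_functional_vanishing_on_dense_polys[OF banach X2a X2b _ _ _ that])
    show "\<forall>f\<in>X. \<forall>g\<in>X. \<Lambda> (\<lambda>z. f z + g z) - (f w + g w) = \<Lambda> f - f w + (\<Lambda> g - g w)"
      using lin_add by simp
    show "\<forall>f\<in>X. cmod (\<Lambda> f - f w) \<le> (C1 + C2) * N f"
      using C1 C2 by (metis distrib_right add_mono norm_triangle_le_diff)
    show "\<forall>p. \<Lambda> (restrD (poly p)) - restrD (poly p) w = 0"
      using eval \<open>w \<in> ball 0 1\<close> by (simp add: restrD_def)
  qed
  with \<open>w \<in> ball 0 1\<close> show ?thesis
    by auto
qed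

end
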